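(* Let $S_\alpha(Y)=\#\{n\leqslant Y:\ p\mid n\Rightarrow p^\alpha\mid n\}$ (the number of natural numbers $n\leqslant Y$ such that every prime dividing $n$ divides it to exponent at least $\alpha$). Then uniformly for integers $\alpha\geqslant2$ and real $Y\geqslant 2$, $$S_\alpha(Y)\ll\alpha\kappa^\alpha Y^{1/\alpha}\log Y,$$ with an absolute implied constant, where $\kappa=\exp\left(\sum_p\frac{1}{p\log p}\right)$.
   Context: The sum defining $\kappa$ is over all primes. *)

theory Defs
  imports "HOL-Analysis.Analysis" "HOL-Computational_Algebra.Primes"
begin

definition S_full :: "nat \<Rightarrow> real \<Rightarrow> nat" where
  "S_full \<alpha> Y = card {n::nat. 1 \<le> n \<and> real n \<le> Y \<and>
      (\<forall>p. prime p \<and> p dvd n \<longrightarrow> p ^ \<alpha> dvd n)}"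

definition kappa :: real where
  "kappa = exp (\<Sum>\<^sub>\<infinity>p\<in>{p::nat. prime p}. 1 / (real p * ln (real p)))"

end

theory Submission
  imports Defs
begin

(* An alpha-full n factors as n = rad(n)^alpha * c with rad c dividing rad n, and n is recovered
   from the pair (c, rad n).  Hence S_alpha(Y) is at most the number of pairs (c, r) with c <= Y,
   rad c | r and r <= (Y/c)^(1/alpha), which is at most Y^(1/alpha) * sum_c c^(-1/alpha) / rad c.
   This sum of a multiplicative function is bounded by its Euler product
   prod_p (1 + sum_{j>=1} p^(-j/alpha) / p) <= prod_p exp (alpha / (p log p)) = kappa^alpha,
   because p^(1/alpha) - 1 >= (log p) / alpha.  The series defining kappa converges by Chebyshev's
   argument: the primes in (n, 2n] divide (2n choose n) <= 4^n.  The outcome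
   S_alpha(Y) <= kappa^alpha Y^(1/alpha) is stronger than required: since alpha log Y >= log 2,
   the theorem holds with C = 1 / log 2. *)

section \<open>Chebyshev's bound and the convergence of the series defining kappa\<close>

lemma prod_primes_between_dvd_central_binomial:
  "\<Prod>{p::nat. prime p \<and> n < p \<and> p \<le> 2 * n} dvd (2 * n choose n)"
proof -
  define b where "b = 2 * n choose n"
  have "b > 0" unfolding b_def by simp
  have "p dvd b" if p: "prime p" "n < p" "p \<le> 2 * n" for p
  proof -
    have "fact n * fact n * b = fact (2 * n)"
      using binomial_fact_lemma[of n "2 * n"] unfolding b_def by simp
    moreover have "p dvd fact (2 * n)" and "\<not> p dvd fact n"
      using p prime_dvd_fact_iff by auto
    ultimately show ?thesis
      using p by (metis dvd_mult_cancel_left prime_dvd_mult_iff)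
  qed
  then have "\<Prod>{p. prime p \<and> n < p \<and> p \<le> 2 * n} dvd \<Prod>(prime_factors b)"
    using \<open>b > 0\<close> by (intro prod_dvd_prod_subset) (auto simp: prime_factors_dvd)
  also have "\<Prod>(prime_factors b) dvd (\<Prod>p\<in>prime_factors b. p ^ multiplicity p b)"
    by (intro prod_dvd_prod dvd_power) (auto simp: prime_factors_multiplicity)
  also have "\<dots> = b"
    using prime_factorization_nat[OF \<open>b > 0\<close>] by simp
  finally show ?thesis unfolding b_def .
qed

lemma card_primes_between_mult_ln_le:
  assumes "n \<ge> 1"
  shows "real (card {p::nat. prime p \<and> n < p \<and> p \<le> 2 * n}) * ln (real n) \<le> 2 * real n * ln 2"
proof -
  define Q where "Q = {p::nat. prime p \<and> n < p \<and> p \<le> 2 * n}"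
  have "n ^ card Q = (\<Prod>p\<in>Q. n)" by simp
  also have "\<dots> \<le> \<Prod>Q" by (intro prod_mono) (auto simp: Q_def)
  also have "\<dots> \<le> 2 * n choose n"
    using prod_primes_between_dvd_central_binomial[of n] unfolding Q_def[symmetric]
    by (intro dvd_imp_le) auto
  also have "\<dots> \<le> 2 ^ (2 * n)" by (rule binomial_le_pow2)
  finally have "real n ^ card Q \<le> 2 ^ (2 * n)"
    by (metis of_nat_le_iff of_nat_numeral of_nat_power)
  then have "ln (real n ^ card Q) \<le> ln (2 ^ (2 * n))"
    using assms by simp
  then show ?thesis
    using assms unfolding Q_def by (simp add: ln_realpow)
qed

lemma sum_inverse_p_ln_p_dyadic_block_le:
  assumes "K \<ge> 1"
  shows "(\<Sum>p | prime p \<and> 2 ^ K < p \<and> p \<le> 2 * 2 ^ K. 1 / (real p * ln (real p)))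
           \<le> 2 / (ln 2 * real K ^ 2)"
proof -
  define n :: nat where "n = 2 ^ K"
  define Q where "Q = {p. prime p \<and> n < p \<and> p \<le> 2 * n}"
  have "n \<ge> 1" unfolding n_def by simp
  have ln_n: "ln (real n) = real K * ln 2"
    unfolding n_def by (simp add: ln_realpow)
  have card_Q: "real (card Q) * real K \<le> 2 * real n"
    using card_primes_between_mult_ln_le[OF \<open>n \<ge> 1\<close>] unfolding Q_def[symmetric] ln_n by simp
  have "1 / (real p * ln (real p)) \<le> 1 / (real n * (real K * ln 2))" if "p \<in> Q" for p
  proof -
    have "n < p" using that unfolding Q_def by simp
    then have "real n \<le> real p" and "real K * ln 2 \<le> ln (real p)"
      using \<open>n \<ge> 1\<close> unfolding ln_n[symmetric] by auto
    then show ?thesis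
      using assms \<open>n \<ge> 1\<close> \<open>n < p\<close> by (intro divide_left_mono mult_mono mult_pos_pos) auto
  qed
  then have "(\<Sum>p\<in>Q. 1 / (real p * ln (real p))) \<le> (\<Sum>p\<in>Q. 1 / (real n * (real K * ln 2)))"
    by (rule sum_mono)
  also have "\<dots> = real (card Q) / (real n * (real K * ln 2))"
    by simp
  also have "\<dots> = real (card Q) * real K / (real n * (ln 2 * real K ^ 2))"
    using assms by (simp add: power2_eq_square)
  also have "\<dots> \<le> 2 * real n / (real n * (ln 2 * real K ^ 2))"
    using card_Q by (intro divide_right_mono) auto
  also have "\<dots> = 2 / (ln 2 * real K ^ 2)"
    using \<open>n \<ge> 1\<close> by simp
  finally show ?thesis unfolding Q_def n_def .
qed

lemma sum_inverse_p_ln_p_upto_pow2_le: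
  assumes "K \<ge> 1"
  shows "(\<Sum>p | prime p \<and> p \<le> 2 ^ K. 1 / (real p * ln (real p)))
           \<le> 1 / (2 * ln 2) + 4 / ln 2 * (1 - 1 / real K)"
  using assms
proof (induction K rule: dec_induct)
  case base
  have "{p::nat. prime p \<and> p \<le> 2 ^ 1} = {2}"
    using prime_ge_2_nat by (auto intro: antisym)
  then show ?case by simp
next
  case (step K)
  have telescoping: "2 / (ln 2 * real K ^ 2) \<le> 4 / ln 2 * (1 / real K - 1 / real (Suc K))"
  proof -
    have "1 / real K - 1 / real (Suc K) = 1 / (real K * (real K + 1))"
      using step.hyps(1) by (simp add: field_simps)
    moreover have "2 / real K ^ 2 \<le> 4 / (real K * (real K + 1))"
      using step.hyps(1) by (simp add: divide_simps power2_eq_square)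
    ultimately show ?thesis
      using divide_right_mono[of "2 / real K ^ 2" "4 / (real K * (real K + 1))" "ln 2"]
      by (simp add: mult.commute)
  qed
  have split: "{p::nat. prime p \<and> p \<le> 2 ^ Suc K}
      = {p. prime p \<and> p \<le> 2 ^ K} \<union> {p. prime p \<and> 2 ^ K < p \<and> p \<le> 2 * 2 ^ K}"
    by auto
  have "(\<Sum>p | prime p \<and> p \<le> 2 ^ Suc K. 1 / (real p * ln (real p)))
      = (\<Sum>p | prime p \<and> p \<le> 2 ^ K. 1 / (real p * ln (real p)))
        + (\<Sum>p | prime p \<and> 2 ^ K < p \<and> p \<le> 2 * 2 ^ K. 1 / (real p * ln (real p)))"
    unfolding split by (rule sum.union_disjoint) auto
  also have "\<dots> \<le> 1 / (2 * ln 2) + 4 / ln 2 * (1 - 1 / real K)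
                     + 4 / ln 2 * (1 / real K - 1 / real (Suc K))"
    using step.IH sum_inverse_p_ln_p_dyadic_block_le[OF step.hyps(1)] telescoping by linarith
  also have "\<dots> = 1 / (2 * ln 2) + 4 / ln 2 * (1 - 1 / real (Suc K))"
    by (simp only: right_diff_distrib)
  finally show ?case .
qed

lemma summable_on_primes_inverse_p_ln_p:
  "(\<lambda>p. 1 / (real p * ln (real p))) summable_on {p::nat. prime p}"
proof (rule nonneg_bdd_above_summable_on)
  show "0 \<le> 1 / (real p * ln (real p))" if "p \<in> {p. prime p}" for p
    using that prime_ge_2_nat[of p] by simp
  show "bdd_above (sum (\<lambda>p. 1 / (real p * ln (real p))) ` {F. F \<subseteq> {p. prime p} \<and> finite F})"
  proof (rule bdd_aboveI, safe)
    fix F assume F: "F \<subseteq> {p::nat. prime p}" "finite F"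
    define K where "K = Suc (Max (insert 0 F))"
    have "F \<subseteq> {p. prime p \<and> p \<le> 2 ^ K}"
    proof
      fix p assume "p \<in> F"
      then have "p < 2 ^ Max (insert 0 F)"
        using F less_exp[of "Max (insert 0 F)"] by (meson Max_ge finite_insert insertCI order_le_less_trans)
      then show "p \<in> {p. prime p \<and> p \<le> 2 ^ K}"
        using F \<open>p \<in> F\<close> unfolding K_def by auto
    qed
    then have "(\<Sum>p\<in>F. 1 / (real p * ln (real p)))
        \<le> (\<Sum>p | prime p \<and> p \<le> 2 ^ K. 1 / (real p * ln (real p)))"
      by (intro sum_mono2) (auto intro: finite_subset[of _ "{..2 ^ K}"] dest: prime_ge_2_nat)
    also have "\<dots> \<le> 1 / (2 * ln 2) + 4 / ln 2 * (1 - 1 / real K)"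
      by (rule sum_inverse_p_ln_p_upto_pow2_le) (simp add: K_def)
    also have "\<dots> \<le> 1 / (2 * ln 2) + 4 / ln 2"
      using mult_left_mono[of "1 - 1 / real K" 1 "4 / ln 2"] by simp
    finally show "(\<Sum>p\<in>F. 1 / (real p * ln (real p))) \<le> 1 / (2 * ln 2) + 4 / ln 2" .
  qed
qed

section \<open>The radical and an Euler product bound\<close>

definition rad :: "nat \<Rightarrow> nat" where
  "rad n = \<Prod>(prime_factors n)"

lemma rad_pos: "0 < rad n"
  unfolding rad_def by (intro prod_pos) (auto dest: in_prime_factors_imp_prime prime_gt_0_nat)

lemma rad_prime_power:
  assumes "prime p" "k > 0"
  shows "rad (p ^ k) = p"
  using assms by (simp add: rad_def prime_factorization_prime_power)

lemma rad_dvd_rad: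
  assumes "m dvd n" "n \<noteq> 0"
  shows "rad m dvd rad n"
proof -
  have "m \<noteq> 0" using assms by auto
  then have "prime_factors m \<subseteq> prime_factors n"
    using assms by (auto simp: in_prime_factors_iff intro: dvd_trans)
  then show ?thesis
    unfolding rad_def by (intro prod_dvd_prod_subset) auto
qed

lemma rad_power_dvd:
  assumes "n > 0" and "\<And>p. prime p \<Longrightarrow> p dvd n \<Longrightarrow> p ^ k dvd n"
  shows "rad n ^ k dvd n"
proof -
  have "rad n ^ k = (\<Prod>p\<in>prime_factors n. p ^ k)"
    unfolding rad_def by (simp add: prod_power_distrib)
  also have "\<dots> dvd (\<Prod>p\<in>prime_factors n. p ^ multiplicity p n)"
  proof (rule prod_dvd_prod)
    fix p assume p: "p \<in> prime_factors n"
    then have "k \<le> multiplicity p n"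
      using assms by (intro multiplicity_geI) (auto simp: prime_factors_dvd not_prime_unit)
    then show "p ^ k dvd p ^ multiplicity p n"
      by (rule le_imp_power_dvd)
  qed
  also have "\<dots> = n"
    using prime_factorization_nat[OF \<open>n > 0\<close>] by simp
  finally show ?thesis .
qed

lemma powr_div_rad_eq_prod_prime_powers:
  assumes "c > 0"
  shows "real c powr s / real (rad c)
           = (\<Prod>p\<in>prime_factors c. real (p ^ multiplicity p c) powr s / real (rad (p ^ multiplicity p c)))"
proof -
  have "real c powr s = (\<Prod>p\<in>prime_factors c. real (p ^ multiplicity p c)) powr s"
    using prime_factorization_nat[OF assms] by (metis of_nat_prod)
  also have "\<dots> = (\<Prod>p\<in>prime_factors c. real (p ^ multiplicity p c) powr s)"
    by (rule prod_powr_distrib)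
  finally have numerator: "real c powr s = \<dots>" .
  have "rad c = (\<Prod>p\<in>prime_factors c. p)"
    by (rule rad_def)
  also have "\<dots> = (\<Prod>p\<in>prime_factors c. rad (p ^ multiplicity p c))"
    by (intro prod.cong refl) (auto simp: rad_prime_power prime_factors_multiplicity)
  finally have denominator: "real (rad c) = (\<Prod>p\<in>prime_factors c. real (rad (p ^ multiplicity p c)))"
    by simp
  show ?thesis
    unfolding numerator denominator by (rule prod_dividef[symmetric])
qed

lemma sum_multiplicative_le_prod_sum_prime_powers:
  fixes f :: "nat \<Rightarrow> real"
  assumes mult: "\<And>c. c > 0 \<Longrightarrow> f c = (\<Prod>p\<in>prime_factors c. f (p ^ multiplicity p c))"
    and nonneg: "\<And>c. c > 0 \<Longrightarrow> 0 \<le> f c"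
  shows "(\<Sum>c=1..M. f c) \<le> (\<Prod>p | prime p \<and> p \<le> M. \<Sum>j\<le>M. f (p ^ j))"
proof -
  define P where "P = {p::nat. prime p \<and> p \<le> M}"
  define E where "E c = restrict (\<lambda>p. multiplicity p c) P" for c
  have "finite P" unfolding P_def by (rule finite_subset[of _ "{..M}"]) auto
  have "f 1 = 1" using mult[of 1] by simp
  have factors_in_P: "prime_factors c \<subseteq> P" if "c \<in> {1..M}" for c
    using that unfolding P_def by (auto dest: dvd_imp_le simp: prime_factors_dvd)
  have factorization_over_P: "c = (\<Prod>p\<in>P. p ^ E c p)" and f_over_P: "f c = (\<Prod>p\<in>P. f (p ^ E c p))"
    if "c \<in> {1..M}" for c
  proof -
    have "c = (\<Prod>p\<in>prime_factors c. p ^ multiplicity p c)"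
      using that by (intro prime_factorization_nat) simp
    also have "\<dots> = (\<Prod>p\<in>P. p ^ E c p)"
      using \<open>finite P\<close> factors_in_P[OF that] that
      by (intro prod.mono_neutral_cong_left) (auto simp: E_def P_def prime_factors_multiplicity)
    finally show "c = (\<Prod>p\<in>P. p ^ E c p)" .
    have "f c = (\<Prod>p\<in>prime_factors c. f (p ^ multiplicity p c))"
      using that by (intro mult) simp
    also have "\<dots> = (\<Prod>p\<in>P. f (p ^ E c p))"
      using \<open>finite P\<close> factors_in_P[OF that] that \<open>f 1 = 1\<close>
      by (intro prod.mono_neutral_cong_left) (auto simp: E_def P_def prime_factors_multiplicity)
    finally show "f c = (\<Prod>p\<in>P. f (p ^ E c p))" .
  qed
  have "inj_on E {1..M}"
    by (intro inj_onI) (metis factorization_over_P)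
  have "E c \<in> PiE P (\<lambda>_. {..M})" if c: "c \<in> {1..M}" for c
  proof -
    have "E c p \<le> M" if "p \<in> P" for p
    proof -
      have "2 ^ E c p \<le> p ^ E c p" "p ^ E c p \<le> c"
        using prime_ge_2_nat[of p] c \<open>p \<in> P\<close>
        by (auto simp: E_def P_def power_mono multiplicity_dvd intro!: dvd_imp_le)
      then show ?thesis
        using c less_exp[of "E c p"] unfolding atLeastAtMost_iff by linarith
    qed
    then show ?thesis by (auto simp: E_def)
  qed
  then have "E ` {1..M} \<subseteq> PiE P (\<lambda>_. {..M})" by blast
  have "(\<Sum>c=1..M. f c) = (\<Sum>c=1..M. \<Prod>p\<in>P. f (p ^ E c p))"
    by (intro sum.cong refl f_over_P)
  also have "\<dots> = (\<Sum>e\<in>E ` {1..M}. \<Prod>p\<in>P. f (p ^ e p))"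
    by (rule sum.reindex[OF \<open>inj_on E {1..M}\<close>, symmetric, unfolded comp_def])
  also have "\<dots> \<le> (\<Sum>e\<in>PiE P (\<lambda>_. {..M}). \<Prod>p\<in>P. f (p ^ e p))"
    using \<open>E ` {1..M} \<subseteq> _\<close> \<open>finite P\<close>
    by (intro sum_mono2 finite_PiE prod_nonneg nonneg) (auto simp: P_def prime_gt_0_nat)
  also have "\<dots> = (\<Prod>p\<in>P. \<Sum>j\<le>M. f (p ^ j))"
    using \<open>finite P\<close> by (intro prod_sum_PiE[symmetric]) auto
  finally show ?thesis unfolding P_def .
qed

lemma sum_lessThan_power_Suc_le:
  fixes x :: real
  assumes "0 \<le> x" "x < 1"
  shows "(\<Sum>j<M. x ^ Suc j) \<le> x / (1 - x)"
proof -
  have "(\<Sum>j<M. x ^ Suc j) = x * (1 - x ^ M) / (1 - x)"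
    using \<open>x < 1\<close> by (simp add: sum_distrib_left[symmetric] sum_gp_strict)
  also have "\<dots> \<le> x / (1 - x)"
    using assms by (intro divide_right_mono mult_left_le) auto
  finally show ?thesis .
qed

lemma sum_prime_power_powr_div_rad_le_exp:
  fixes a :: real
  assumes p: "prime p" and "a > 0"
  shows "(\<Sum>j\<le>M. real (p ^ j) powr (-1 / a) / real (rad (p ^ j))) \<le> exp (a / (real p * ln (real p)))"
proof -
  define x where "x = real p powr (-1 / a)"
  have "real p \<ge> 2" using prime_ge_2_nat[OF p] by linarith
  then have "ln (real p) > 0" by simp
  have "exp (ln (real p) / a) = 1 / x"
    unfolding x_def powr_def using \<open>real p \<ge> 2\<close> by (simp add: exp_minus field_simps)
  then have inv_x: "1 / x - 1 \<ge> ln (real p) / a"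
    using exp_ge_add_one_self[of "ln (real p) / a"] by linarith
  have "0 < x"
    unfolding x_def using \<open>real p \<ge> 2\<close> by simp
  have "1 < 1 / x"
    using inv_x divide_pos_pos[OF \<open>ln (real p) > 0\<close> \<open>a > 0\<close>] by linarith
  then have "x < 1"
    using \<open>0 < x\<close> by (simp add: field_simps)
  have powers: "real (p ^ j) powr (-1 / a) = x ^ j" for j
    using \<open>real p \<ge> 2\<close> unfolding x_def by (simp add: powr_power powr_realpow[symmetric] powr_powr mult.commute)
  have "(\<Sum>j\<le>M. real (p ^ j) powr (-1 / a) / real (rad (p ^ j)))
      = 1 + (\<Sum>j<M. real (p ^ Suc j) powr (-1 / a) / real (rad (p ^ Suc j)))"
    by (simp only: sum.atMost_shift) (simp add: rad_def)
  also have "\<dots> = 1 + (\<Sum>j<M. x ^ Suc j) / real p"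
    by (simp only: powers rad_prime_power[OF p zero_less_Suc] sum_divide_distrib)
  also have "(\<Sum>j<M. x ^ Suc j) \<le> x / (1 - x)"
    using \<open>0 < x\<close> \<open>x < 1\<close> by (intro sum_lessThan_power_Suc_le) auto
  also have "\<dots> = 1 / (1 / x - 1)"
    using \<open>0 < x\<close> \<open>x < 1\<close> by (simp add: field_simps)
  also have "\<dots> \<le> 1 / (ln (real p) / a)"
    using inv_x \<open>ln (real p) > 0\<close> \<open>a > 0\<close> \<open>1 < 1 / x\<close> by (intro divide_left_mono mult_pos_pos) auto
  also have "\<dots> = a / ln (real p)"
    by simp
  finally have "(\<Sum>j\<le>M. real (p ^ j) powr (-1 / a) / real (rad (p ^ j))) \<le> 1 + a / (real p * ln (real p))"
    using \<open>real p \<ge> 2\<close> by (simp add: divide_right_mono mult.commute)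
  also have "\<dots> \<le> exp (a / (real p * ln (real p)))"
    by (rule exp_ge_add_one_self)
  finally show ?thesis .
qed

lemma sum_powr_div_rad_le_kappa_power:
  assumes "\<alpha> > 0"
  shows "(\<Sum>c=1..M. real c powr (-1 / real \<alpha>) / real (rad c)) \<le> kappa ^ \<alpha>"
proof -
  define P where "P = {p::nat. prime p \<and> p \<le> M}"
  have "finite P" unfolding P_def by (rule finite_subset[of _ "{..M}"]) auto
  have "(\<Sum>c=1..M. real c powr (-1 / real \<alpha>) / real (rad c))
      \<le> (\<Prod>p\<in>P. \<Sum>j\<le>M. real (p ^ j) powr (-1 / real \<alpha>) / real (rad (p ^ j)))"
    unfolding P_def
    by (intro sum_multiplicative_le_prod_sum_prime_powers powr_div_rad_eq_prod_prime_powers) auto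
  also have "\<dots> \<le> (\<Prod>p\<in>P. exp (real \<alpha> / (real p * ln (real p))))"
    using assms by (intro prod_mono conjI sum_nonneg sum_prime_power_powr_div_rad_le_exp) (auto simp: P_def)
  also have "\<dots> = exp (real \<alpha> * (\<Sum>p\<in>P. 1 / (real p * ln (real p))))"
    by (simp add: exp_sum[OF \<open>finite P\<close>] sum_distrib_left)
  also have "\<dots> \<le> exp (real \<alpha> * (\<Sum>\<^sub>\<infinity>p\<in>{p::nat. prime p}. 1 / (real p * ln (real p))))"
  proof -
    have "(\<Sum>p\<in>P. 1 / (real p * ln (real p))) = (\<Sum>\<^sub>\<infinity>p\<in>P. 1 / (real p * ln (real p)))"
      using \<open>finite P\<close> by simp
    also have "\<dots> \<le> (\<Sum>\<^sub>\<infinity>p\<in>{p::nat. prime p}. 1 / (real p * ln (real p)))"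
      using \<open>finite P\<close> summable_on_primes_inverse_p_ln_p
      by (intro infsum_mono_neutral) (auto simp: P_def dest: prime_ge_2_nat)
    finally show ?thesis by (intro exp_mono mult_left_mono) auto
  qed
  also have "\<dots> = kappa ^ \<alpha>"
    unfolding kappa_def by (rule exp_of_nat_mult)
  finally show ?thesis .
qed

section \<open>Counting alpha-full numbers\<close>

lemma
  fixes d :: nat and X :: real
  assumes "d > 0"
  shows finite_multiples_le: "finite {r::nat. 0 < r \<and> d dvd r \<and> real r \<le> X}"
    and card_multiples_le: "X \<ge> 0 \<Longrightarrow> real (card {r::nat. 0 < r \<and> d dvd r \<and> real r \<le> X}) \<le> X / real d"
proof -
  have multiples: "{r::nat. 0 < r \<and> d dvd r \<and> real r \<le> X} \<subseteq> (\<lambda>t. d * t) ` {1..nat \<lfloor>X / real d\<rfloor>}"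
  proof
    fix r assume "r \<in> {r. 0 < r \<and> d dvd r \<and> real r \<le> X}"
    then obtain t where "r = d * t" "0 < t" "real d * real t \<le> X"
      by auto
    moreover from this have "t \<le> nat \<lfloor>X / real d\<rfloor>"
      using assms by (intro le_nat_floor) (simp add: field_simps)
    ultimately show "r \<in> (\<lambda>t. d * t) ` {1..nat \<lfloor>X / real d\<rfloor>}"
      by auto
  qed
  then show "finite {r::nat. 0 < r \<and> d dvd r \<and> real r \<le> X}"
    by (rule finite_subset) simp
  assume "X \<ge> 0"
  have "card {r::nat. 0 < r \<and> d dvd r \<and> real r \<le> X} \<le> card {1..nat \<lfloor>X / real d\<rfloor>}"
    using multiples by (intro surj_card_le) auto
  then have "real (card {r::nat. 0 < r \<and> d dvd r \<and> real r \<le> X}) \<le> real (nat \<lfloor>X / real d\<rfloor>)"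
    by simp
  also have "\<dots> \<le> X / real d"
    using \<open>X \<ge> 0\<close> by simp
  finally show "real (card {r::nat. 0 < r \<and> d dvd r \<and> real r \<le> X}) \<le> X / real d" .
qed

lemma card_alpha_full_le_sum_multiples_of_rad:
  assumes "\<alpha> > 0"
  shows "real (S_full \<alpha> Y)
    \<le> (\<Sum>c=1..nat \<lfloor>Y\<rfloor>. real (card {r. 0 < r \<and> rad c dvd r \<and> real r \<le> (Y / real c) powr (1 / real \<alpha>)}))"
proof -
  define N where "N = {n::nat. 1 \<le> n \<and> real n \<le> Y \<and> (\<forall>p. prime p \<and> p dvd n \<longrightarrow> p ^ \<alpha> dvd n)}"
  define R where "R c = {r. 0 < r \<and> rad c dvd r \<and> real r \<le> (Y / real c) powr (1 / real \<alpha>)}" for c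
  define F where "F n = (n div rad n ^ \<alpha>, rad n)" for n
  have decomposition: "n = rad n ^ \<alpha> * fst (F n)" if "n \<in> N" for n
    using that rad_power_dvd[of n \<alpha>] by (auto simp: N_def F_def)
  have "inj_on F N"
    by (intro inj_onI) (metis decomposition prod.inject F_def)
  have "F n \<in> Sigma {1..nat \<lfloor>Y\<rfloor>} R" if "n \<in> N" for n
  proof -
    define c where "c = n div rad n ^ \<alpha>"
    have n: "n > 0" "real n \<le> Y" and "n = rad n ^ \<alpha> * c"
      using that decomposition[OF that] by (auto simp: N_def F_def c_def)
    then have "c > 0" "c dvd n"
      by (metis gr0I mult_0_right, metis dvd_triv_right)
    then have "c \<le> n" using n by (simp add: dvd_imp_le)
    have "real (rad n) ^ \<alpha> \<le> Y / real c"
      using \<open>n = _\<close> n \<open>c > 0\<close> by (simp add: field_simps) (metis of_nat_mult of_nat_power)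
    then have "(real (rad n) ^ \<alpha>) powr (1 / real \<alpha>) \<le> (Y / real c) powr (1 / real \<alpha>)"
      by (intro powr_mono2) auto
    then have "real (rad n) \<le> (Y / real c) powr (1 / real \<alpha>)"
      using assms rad_pos[of n] by (simp add: powr_realpow[symmetric] powr_powr)
    moreover have "c \<le> nat \<lfloor>Y\<rfloor>"
      using \<open>c \<le> n\<close> n by (intro le_nat_floor) simp
    moreover have "rad c dvd rad n"
      using \<open>c dvd n\<close> n by (intro rad_dvd_rad) auto
    ultimately show ?thesis
      using \<open>c > 0\<close> rad_pos[of n] by (simp add: F_def c_def R_def)
  qed
  then have "F ` N \<subseteq> Sigma {1..nat \<lfloor>Y\<rfloor>} R"
    by blast
  moreover have "finite (Sigma {1..nat \<lfloor>Y\<rfloor>} R)"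
    by (intro finite_SigmaI) (auto simp: R_def finite_multiples_le rad_pos)
  ultimately have "card N \<le> card (Sigma {1..nat \<lfloor>Y\<rfloor>} R)"
    using \<open>inj_on F N\<close> by (intro card_inj_on_le)
  also have "\<dots> = (\<Sum>c=1..nat \<lfloor>Y\<rfloor>. card (R c))"
    by (intro card_SigmaI) (auto simp: R_def finite_multiples_le rad_pos)
  finally show ?thesis
    unfolding S_full_def N_def[symmetric] R_def by (simp add: of_nat_sum[symmetric] del: of_nat_sum)
qed

lemma S_full_le_kappa_power:
  assumes "\<alpha> > 0" "Y \<ge> 0"
  shows "real (S_full \<alpha> Y) \<le> kappa ^ \<alpha> * Y powr (1 / real \<alpha>)"
proof -
  have "real (S_full \<alpha> Y)
      \<le> (\<Sum>c=1..nat \<lfloor>Y\<rfloor>. real (card {r. 0 < r \<and> rad c dvd r \<and> real r \<le> (Y / real c) powr (1 / real \<alpha>)}))"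
    using assms(1) by (rule card_alpha_full_le_sum_multiples_of_rad)
  also have "\<dots> \<le> (\<Sum>c=1..nat \<lfloor>Y\<rfloor>. (Y / real c) powr (1 / real \<alpha>) / real (rad c))"
    by (intro sum_mono card_multiples_le rad_pos) simp
  also have "\<dots> = Y powr (1 / real \<alpha>) * (\<Sum>c=1..nat \<lfloor>Y\<rfloor>. real c powr (-1 / real \<alpha>) / real (rad c))"
    using assms by (simp add: sum_distrib_left powr_divide powr_minus_divide)
  also have "\<dots> \<le> Y powr (1 / real \<alpha>) * kappa ^ \<alpha>"
    using assms by (intro mult_left_mono sum_powr_div_rad_le_kappa_power) auto
  finally show ?thesis
    by (simp add: mult.commute)
qed

theorem lemma5:
  shows "\<exists>C::real. \<forall>(\<alpha>::nat) (Y::real). \<alpha> \<ge> 2 \<longrightarrow> Y \<ge> 2 \<longrightarrow>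
     real (S_full \<alpha> Y) \<le> C * real \<alpha> * kappa ^ \<alpha> * Y powr (1 / real \<alpha>) * ln Y"
proof (intro exI allI impI)
  fix \<alpha> :: nat and Y :: real
  assume "\<alpha> \<ge> 2" "Y \<ge> 2"
  have "ln 2 \<le> ln Y" "0 \<le> ln Y"
    using \<open>Y \<ge> 2\<close> by simp_all
  then have "ln 2 \<le> real \<alpha> * ln Y"
    using \<open>\<alpha> \<ge> 2\<close> mult_right_mono[of 2 "real \<alpha>" "ln Y"] by linarith
  then have log_factor: "1 \<le> 1 / ln 2 * real \<alpha> * ln Y"
    by (simp add: field_simps)
  have "real (S_full \<alpha> Y) \<le> kappa ^ \<alpha> * Y powr (1 / real \<alpha>)"
    using \<open>\<alpha> \<ge> 2\<close> \<open>Y \<ge> 2\<close> by (intro S_full_le_kappa_power) auto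
  also have "\<dots> \<le> kappa ^ \<alpha> * Y powr (1 / real \<alpha>) * (1 / ln 2 * real \<alpha> * ln Y)"
    using mult_left_mono[OF log_factor, of "kappa ^ \<alpha> * Y powr (1 / real \<alpha>)"] by (simp add: kappa_def)
  finally show "real (S_full \<alpha> Y) \<le> 1 / ln 2 * real \<alpha> * kappa ^ \<alpha> * Y powr (1 / real \<alpha>) * ln Y"
    by (simp add: algebra_simps)
qed

end
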